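(* Let $R$ be an integral domain. If $R$ is perinormal, then $R_W$ is perinormal for every multiplicative set $W \subseteq R$. Conversely, if $R_{\mathfrak{m}}$ is perinormal for every maximal ideal $\mathfrak{m}$ of $R$, then $R$ is perinormal.
   Context: All rings are commutative with identity; "local" means having a unique maximal ideal; an overring of a domain $R$ is a ring between $R$ and its fraction field. A ring extension $A \subseteq B$ satisfies going-down if whenever $\mathfrak{p} \subset \mathfrak{q}$ are primes of $A$ and $Q$ is a prime of $B$ with $Q \cap A = \mathfrak{q}$, there is a prime $P \subseteq Q$ of $B$ with $P \cap A = \mathfrak{p}$. A domain $R$ is perinormal if every local overring $S$ of $R$ such that $R \subseteq S$ satisfies going-down is a localization of $R$. *)

theory Defs
  imports Main
begin

text \<open>An integral domain is represented as a subring R of a field 'a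
(every domain embeds in its fraction field). All rings considered
(overrings, localizations) are subrings of the same ambient field.\<close>

definition subring :: "'a::field set \<Rightarrow> bool" where
  "subring S \<longleftrightarrow> 0 \<in> S \<and> 1 \<in> S \<and>
     (\<forall>x\<in>S. \<forall>y\<in>S. x + y \<in> S \<and> x - y \<in> S \<and> x * y \<in> S)"

definition frac :: "'a::field set \<Rightarrow> 'a set" where
  "frac R = {a / b | a b. a \<in> R \<and> b \<in> R \<and> b \<noteq> 0}"

definition ideal_in :: "'a::field set \<Rightarrow> 'a set \<Rightarrow> bool" where
  "ideal_in S I \<longleftrightarrow> I \<subseteq> S \<and> 0 \<in> I \<and>
     (\<forall>x\<in>I. \<forall>y\<in>I. x + y \<in> I) \<and> (\<forall>s\<in>S. \<forall>x\<in>I. s * x \<in> I)"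

definition prime_ideal_in :: "'a::field set \<Rightarrow> 'a set \<Rightarrow> bool" where
  "prime_ideal_in S P \<longleftrightarrow> ideal_in S P \<and> 1 \<notin> P \<and>
     (\<forall>a\<in>S. \<forall>b\<in>S. a * b \<in> P \<longrightarrow> a \<in> P \<or> b \<in> P)"

definition maximal_ideal_in :: "'a::field set \<Rightarrow> 'a set \<Rightarrow> bool" where
  "maximal_ideal_in S M \<longleftrightarrow> ideal_in S M \<and> M \<noteq> S \<and>
     (\<forall>J. ideal_in S J \<and> M \<subseteq> J \<longrightarrow> J = M \<or> J = S)"

definition local_ring :: "'a::field set \<Rightarrow> bool" where
  "local_ring S \<longleftrightarrow> (\<exists>!M. maximal_ideal_in S M)"

definition mult_set :: "'a::field set \<Rightarrow> 'a set \<Rightarrow> bool" where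
  "mult_set R W \<longleftrightarrow> W \<subseteq> R \<and> 1 \<in> W \<and> 0 \<notin> W \<and>
     (\<forall>x\<in>W. \<forall>y\<in>W. x * y \<in> W)"

definition localization :: "'a::field set \<Rightarrow> 'a set \<Rightarrow> 'a set" where
  "localization R W = {a / w | a w. a \<in> R \<and> w \<in> W}"

definition going_down :: "'a::field set \<Rightarrow> 'a set \<Rightarrow> bool" where
  "going_down A B \<longleftrightarrow>
     (\<forall>p q Q. prime_ideal_in A p \<and> prime_ideal_in A q \<and> p \<subset> q \<and>
        prime_ideal_in B Q \<and> Q \<inter> A = q \<longrightarrow>
        (\<exists>P. prime_ideal_in B P \<and> P \<subseteq> Q \<and> P \<inter> A = p))"

definition perinormal :: "'a::field set \<Rightarrow> bool" where
  "perinormal R \<longleftrightarrow> subring R \<and>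
     (\<forall>S. subring S \<and> R \<subseteq> S \<and> S \<subseteq> frac R \<and> local_ring S \<and> going_down R S
        \<longrightarrow> (\<exists>W. mult_set R W \<and> S = localization R W))"

end

theory Submission
  imports Defs
begin

text \<open>Going-down is insensitive to localizing the base: for \<open>R \<subseteq> R\<^sub>W \<subseteq> S\<close>
  the primes of \<open>R\<^sub>W\<close> are exactly the extensions of the primes of \<open>R\<close> missing \<open>W\<close>, so
  \<open>R \<subseteq> S\<close> has going-down iff \<open>R\<^sub>W \<subseteq> S\<close> has. If \<open>R\<close> is perinormal, a local going-down
  overring of \<open>R\<^sub>W\<close> is then a localization of \<open>R\<close>, hence of \<open>R\<^sub>W\<close>. Conversely a local
  going-down overring \<open>S\<close> of \<open>R\<close> with maximal ideal \<open>M\<close> contains \<open>R\<^sub>m\<close> for a maximal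
  ideal \<open>m \<supseteq> M \<inter> R\<close> (elements of \<open>R - m\<close> lie outside \<open>M\<close>, so
  are units of \<open>S\<close>), so it is a localization of \<open>R\<^sub>m\<close>; a localization of a localization is
  a localization.\<close>

lemma
  assumes "subring S"
  shows subring_zero: "0 \<in> S" and subring_one: "1 \<in> S"
    and subring_add: "x \<in> S \<Longrightarrow> y \<in> S \<Longrightarrow> x + y \<in> S"
    and subring_diff: "x \<in> S \<Longrightarrow> y \<in> S \<Longrightarrow> x - y \<in> S"
    and subring_mult: "x \<in> S \<Longrightarrow> y \<in> S \<Longrightarrow> x * y \<in> S"
  using assms unfolding subring_def by auto

lemma
  assumes "mult_set R W"
  shows mult_set_subset: "W \<subseteq> R" and mult_set_one: "1 \<in> W"
    and mult_set_nonzero: "w \<in> W \<Longrightarrow> w \<noteq> 0"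
    and mult_set_mult: "x \<in> W \<Longrightarrow> y \<in> W \<Longrightarrow> x * y \<in> W"
  using assms unfolding mult_set_def by auto

lemma
  assumes "ideal_in S I"
  shows ideal_subset: "I \<subseteq> S" and ideal_zero: "0 \<in> I"
    and ideal_add: "x \<in> I \<Longrightarrow> y \<in> I \<Longrightarrow> x + y \<in> I"
    and ideal_mult: "s \<in> S \<Longrightarrow> x \<in> I \<Longrightarrow> s * x \<in> I"
  using assms unfolding ideal_in_def by auto

lemma mult_set_mono: "mult_set R W \<Longrightarrow> R \<subseteq> L \<Longrightarrow> mult_set L W"
  unfolding mult_set_def by auto

lemma localizationI: "a \<in> R \<Longrightarrow> w \<in> W \<Longrightarrow> x = a / w \<Longrightarrow> x \<in> localization R W"
  unfolding localization_def by auto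

lemma localizationE:
  assumes "x \<in> localization R W"
  obtains a w where "a \<in> R" "w \<in> W" "x = a / w"
  using assms unfolding localization_def by auto

lemma subset_localization: "mult_set R W \<Longrightarrow> R \<subseteq> localization R W"
  by (auto intro: localizationI[of _ _ 1] mult_set_one)

lemma inverse_in_localization:
  "subring R \<Longrightarrow> mult_set R W \<Longrightarrow> w \<in> W \<Longrightarrow> 1 / w \<in> localization R W"
  by (rule localizationI) (auto intro: subring_one)

lemma localization_subset_if_inverses:
  assumes S: "subring S" and "R \<subseteq> S" and inv: "\<And>w. w \<in> W \<Longrightarrow> 1 / w \<in> S"
  shows "localization R W \<subseteq> S"
proof
  fix x assume "x \<in> localization R W"
  then obtain a w where "a \<in> R" "w \<in> W" "x = a / w" by (rule localizationE)
  moreover from this have "a * (1 / w) \<in> S" using assms by (blast intro: subring_mult)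
  ultimately show "x \<in> S" by simp
qed

lemma subring_localization:
  assumes R: "subring R" and W: "mult_set R W"
  shows "subring (localization R W)"
proof -
  let ?L = "localization R W"
  have closed: "x + y \<in> ?L \<and> x - y \<in> ?L \<and> x * y \<in> ?L" if "x \<in> ?L" "y \<in> ?L" for x y
  proof -
    obtain a w b v where ab: "a \<in> R" "w \<in> W" "x = a / w" "b \<in> R" "v \<in> W" "y = b / v"
      using \<open>x \<in> ?L\<close> \<open>y \<in> ?L\<close> by (metis localizationE)
    have nz: "w \<noteq> 0" "v \<noteq> 0"
      using ab mult_set_nonzero[OF W] by auto
    have den: "w * v \<in> W" using ab mult_set_mult[OF W] by auto
    have num: "a * v + b * w \<in> R" "a * v - b * w \<in> R" "a * b \<in> R"
      using ab R mult_set_subset[OF W] by (auto intro!: subring_add subring_diff subring_mult)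
    have "x + y = (a * v + b * w) / (w * v)" "x - y = (a * v - b * w) / (w * v)"
      "x * y = (a * b) / (w * v)"
      unfolding ab(3,6) using nz by (simp_all add: field_simps)
    with num den show ?thesis by (metis localizationI)
  qed
  have "0 \<in> ?L" "1 \<in> ?L" using subset_localization[OF W] R by (auto intro: subring_zero subring_one)
  with closed show ?thesis unfolding subring_def by blast
qed

lemma frac_mono: "R \<subseteq> S \<Longrightarrow> frac R \<subseteq> frac S"
  unfolding frac_def by blast

lemma frac_localization_subset:
  assumes R: "subring R" and W: "mult_set R W"
  shows "frac (localization R W) \<subseteq> frac R"
proof
  fix z assume "z \<in> frac (localization R W)"
  then obtain x y where xy: "x \<in> localization R W" "y \<in> localization R W" "y \<noteq> 0" "z = x / y"
    unfolding frac_def by auto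
  then obtain a w b v where ab: "a \<in> R" "w \<in> W" "x = a / w" "b \<in> R" "v \<in> W" "y = b / v"
    by (metis localizationE)
  have nz: "w \<noteq> 0" "v \<noteq> 0" "b \<noteq> 0" using ab mult_set_nonzero[OF W] xy by auto
  have "z = (a * v) / (w * b)" using xy(4) ab(3,6) nz by (simp add: field_simps)
  moreover have "a * v \<in> R" "w * b \<in> R" "w * b \<noteq> 0"
    using ab nz mult_set_subset[OF W] R by (auto intro: subring_mult)
  ultimately show "z \<in> frac R" unfolding frac_def by blast
qed

lemma localization_intermediate:
  assumes R: "subring R" and V: "mult_set R V" and "R \<subseteq> L" and "L \<subseteq> localization R V"
  shows "localization L V = localization R V"
proof
  show "localization R V \<subseteq> localization L V"
    using \<open>R \<subseteq> L\<close> unfolding localization_def by blast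
  show "localization L V \<subseteq> localization R V"
    using assms subring_localization[OF R V] inverse_in_localization[OF R V]
      subset_localization[OF V]
    by (intro localization_subset_if_inverses) auto
qed

lemma one_in_ideal_iff:
  assumes "subring S" "ideal_in S I"
  shows "1 \<in> I \<longleftrightarrow> I = S"
proof
  assume "1 \<in> I"
  then have "S \<subseteq> I" using ideal_mult[OF assms(2), of _ 1] by (metis mult.right_neutral subsetI)
  then show "I = S" using ideal_subset[OF assms(2)] by blast
qed (use assms subring_one in blast)

lemma prime_ideal_contraction:
  assumes A: "subring A" and "A \<subseteq> B" and Q: "prime_ideal_in B Q"
  shows "prime_ideal_in A (Q \<inter> A)"
proof -
  have Qi: "ideal_in B Q" and "1 \<notin> Q"
    and Qprime: "\<And>a b. a \<in> B \<Longrightarrow> b \<in> B \<Longrightarrow> a * b \<in> Q \<Longrightarrow> a \<in> Q \<or> b \<in> Q"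
    using Q unfolding prime_ideal_in_def by auto
  have "ideal_in A (Q \<inter> A)" unfolding ideal_in_def
  proof (intro conjI ballI)
    show "Q \<inter> A \<subseteq> A" "0 \<in> Q \<inter> A" using ideal_zero[OF Qi] subring_zero[OF A] by auto
    show "x + y \<in> Q \<inter> A" if "x \<in> Q \<inter> A" "y \<in> Q \<inter> A" for x y
      using that ideal_add[OF Qi] subring_add[OF A] by blast
    show "s * x \<in> Q \<inter> A" if "s \<in> A" "x \<in> Q \<inter> A" for s x
      using that \<open>A \<subseteq> B\<close> ideal_mult[OF Qi] subring_mult[OF A] by blast
  qed
  moreover have "a \<in> Q \<inter> A \<or> b \<in> Q \<inter> A" if "a \<in> A" "b \<in> A" "a * b \<in> Q \<inter> A" for a b
    using that \<open>A \<subseteq> B\<close> Qprime by blast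
  ultimately show ?thesis using \<open>1 \<notin> Q\<close> unfolding prime_ideal_in_def by blast
qed

lemma ideal_add_multiples:
  assumes S: "subring S" and I: "ideal_in S I" and "x \<in> S"
  shows "ideal_in S {a + x * r | a r. a \<in> I \<and> r \<in> S}"
  unfolding ideal_in_def
proof (intro conjI ballI)
  let ?J = "{a + x * r | a r. a \<in> I \<and> r \<in> S}"
  show "?J \<subseteq> S"
    using ideal_subset[OF I] \<open>x \<in> S\<close> S by (auto intro: subring_add subring_mult)
  have "0 = 0 + x * 0" by simp
  then show "0 \<in> ?J" using ideal_zero[OF I] subring_zero[OF S] by blast
  fix u v assume "u \<in> ?J" "v \<in> ?J"
  then obtain a r b s where "a \<in> I" "r \<in> S" "b \<in> I" "s \<in> S" "u = a + x * r" "v = b + x * s"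
    by blast
  moreover from this have "u + v = (a + b) + x * (r + s)" by (simp add: algebra_simps)
  ultimately show "u + v \<in> ?J" using ideal_add[OF I] subring_add[OF S] by blast
next
  let ?J = "{a + x * r | a r. a \<in> I \<and> r \<in> S}"
  fix t u assume "t \<in> S" "u \<in> ?J"
  then obtain a r where "a \<in> I" "r \<in> S" "u = a + x * r" by blast
  moreover from this have "t * u = t * a + x * (t * r)" by (simp add: algebra_simps)
  ultimately show "t * u \<in> ?J" using \<open>t \<in> S\<close> ideal_mult[OF I] subring_mult[OF S] by blast
qed

lemma exists_maximal_ideal:
  assumes S: "subring S" and I: "ideal_in S I" "1 \<notin> I"
  obtains M where "maximal_ideal_in S M" "I \<subseteq> M"
proof -
  let ?A = "{J. ideal_in S J \<and> 1 \<notin> J \<and> I \<subseteq> J}"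
  have "\<exists>M\<in>?A. \<forall>X\<in>?A. M \<subseteq> X \<longrightarrow> X = M"
  proof (rule Zorn_Lemma2, rule ballI)
    fix C assume C: "C \<in> chains ?A"
    show "\<exists>U\<in>?A. \<forall>X\<in>C. X \<subseteq> U"
    proof (cases "C = {}")
      case True
      then show ?thesis using I by auto
    next
      case False
      have CA: "C \<subseteq> ?A" using chainsD2[OF C] .
      have "ideal_in S (\<Union>C)" unfolding ideal_in_def
      proof (intro conjI ballI)
        show "\<Union>C \<subseteq> S" "0 \<in> \<Union>C" using CA ideal_subset ideal_zero False by blast+
        fix x y assume "x \<in> \<Union>C" "y \<in> \<Union>C"
        then obtain X Y where "X \<in> C" "Y \<in> C" "x \<in> X" "y \<in> Y" by auto
        moreover from chainsD[OF C this(1,2)] have "X \<subseteq> Y \<or> Y \<subseteq> X" .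
        ultimately show "x + y \<in> \<Union>C" using CA ideal_add by blast
      next
        fix s x assume "s \<in> S" "x \<in> \<Union>C"
        then show "s * x \<in> \<Union>C" using CA ideal_mult by blast
      qed
      moreover have "1 \<notin> \<Union>C" "I \<subseteq> \<Union>C" using CA False by auto
      ultimately show ?thesis by auto
    qed
  qed
  then obtain M where M: "M \<in> ?A" "\<forall>X\<in>?A. M \<subseteq> X \<longrightarrow> X = M" by blast
  have "maximal_ideal_in S M" unfolding maximal_ideal_in_def
  proof (intro conjI allI impI)
    show "ideal_in S M" "M \<noteq> S" using M subring_one[OF S] by auto
    fix J assume "ideal_in S J \<and> M \<subseteq> J"
    then show "J = M \<or> J = S" using M one_in_ideal_iff[OF S] by blast
  qed
  with M that show ?thesis by blast
qed

lemma maximal_ideal_comaximal: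
  assumes R: "subring R" and m: "maximal_ideal_in R m" and "x \<in> R" "x \<notin> m"
  obtains a r where "a \<in> m" "r \<in> R" "1 = a + x * r"
proof -
  let ?J = "{a + x * r | a r. a \<in> m \<and> r \<in> R}"
  have mi: "ideal_in R m" using m unfolding maximal_ideal_in_def by simp
  have J: "ideal_in R ?J" using ideal_add_multiples[OF R mi \<open>x \<in> R\<close>] .
  have "m \<subseteq> ?J"
  proof
    fix a assume "a \<in> m"
    moreover have "a = a + x * 0" by simp
    ultimately show "a \<in> ?J" using subring_zero[OF R] by blast
  qed
  moreover have "x \<in> ?J"
  proof -
    have "x = 0 + x * 1" by simp
    then show ?thesis using ideal_zero[OF mi] subring_one[OF R] by blast
  qed
  ultimately have "?J = R" using m J \<open>x \<notin> m\<close> unfolding maximal_ideal_in_def by blast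
  then have "1 \<in> ?J" using subring_one[OF R] by simp
  with that show ?thesis by blast
qed

lemma maximal_imp_prime_ideal:
  assumes R: "subring R" and m: "maximal_ideal_in R m"
  shows "prime_ideal_in R m"
proof -
  have mi: "ideal_in R m" and "m \<noteq> R" using m unfolding maximal_ideal_in_def by auto
  have "b \<in> m" if "a \<in> R" "b \<in> R" "a * b \<in> m" "a \<notin> m" for a b
  proof -
    obtain c r where "c \<in> m" "r \<in> R" "1 = c + a * r"
      using maximal_ideal_comaximal[OF R m \<open>a \<in> R\<close> \<open>a \<notin> m\<close>] .
    then have "b = b * c + r * (a * b)" by (metis mult.commute distrib_left mult.left_commute mult_1_right)
    moreover have "b * c \<in> m" "r * (a * b) \<in> m"
      using \<open>c \<in> m\<close> \<open>r \<in> R\<close> that ideal_mult[OF mi] by (auto simp: mult.commute)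
    ultimately show "b \<in> m" using ideal_add[OF mi] by metis
  qed
  moreover have "1 \<notin> m" using one_in_ideal_iff[OF R mi] \<open>m \<noteq> R\<close> by blast
  ultimately show ?thesis using mi unfolding prime_ideal_in_def by blast
qed

lemma mult_set_prime_compl:
  assumes R: "subring R" and p: "prime_ideal_in R p"
  shows "mult_set R (R - p)"
  using p subring_one[OF R] subring_mult[OF R] unfolding prime_ideal_in_def mult_set_def ideal_in_def
  by blast

lemma local_ring_inverse:
  assumes S: "subring S" and "local_ring S" and M: "maximal_ideal_in S M"
    and "x \<in> S" "x \<notin> M"
  shows "1 / x \<in> S"
proof -
  have "0 \<in> M" using M unfolding maximal_ideal_in_def ideal_in_def by simp
  then have "x \<noteq> 0" using \<open>x \<notin> M\<close> by auto
  let ?J = "{a + x * r | a r. a \<in> {0} \<and> r \<in> S}"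
  have zero: "ideal_in S {0}" using subring_zero[OF S] unfolding ideal_in_def by auto
  have J: "ideal_in S ?J" using ideal_add_multiples[OF S zero \<open>x \<in> S\<close>] .
  have "1 \<in> ?J"
  proof (rule ccontr)
    assume "1 \<notin> ?J"
    then obtain M' where "maximal_ideal_in S M'" "?J \<subseteq> M'"
      using exists_maximal_ideal[OF S J] by blast
    moreover have "M' = M" using \<open>local_ring S\<close> M calculation(1) unfolding local_ring_def by blast
    moreover have "x \<in> ?J" using subring_one[OF S] by force
    ultimately show False using \<open>x \<notin> M\<close> by blast
  qed
  then obtain r where "r \<in> S" "1 = x * r" by auto
  then show ?thesis using \<open>x \<noteq> 0\<close> by (metis nonzero_eq_divide_eq mult.commute)
qed

subsection \<open>Ideals of a localization\<close>

lemma ideal_localization: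
  assumes R: "subring R" and W: "mult_set R W" and I: "ideal_in R I"
  shows "ideal_in (localization R W) (localization I W)"
  unfolding ideal_in_def
proof (intro conjI ballI)
  let ?L = "localization R W" and ?I = "localization I W"
  have WR: "W \<subseteq> R" using mult_set_subset[OF W] .
  show "?I \<subseteq> ?L" using ideal_subset[OF I] unfolding localization_def by blast
  show "0 \<in> ?I" using ideal_zero[OF I] mult_set_one[OF W] by (auto intro: localizationI[of 0 _ 1])
  fix x y assume "x \<in> ?I" "y \<in> ?I"
  then obtain a w b v where ab: "a \<in> I" "w \<in> W" "x = a / w" "b \<in> I" "v \<in> W" "y = b / v"
    by (metis localizationE)
  have "x + y = (v * a + w * b) / (w * v)"
    unfolding ab(3,6) using ab mult_set_nonzero[OF W] by (simp add: field_simps)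
  moreover have "v * a \<in> I" "w * b \<in> I" using ab WR ideal_mult[OF I] by blast+
  then have "v * a + w * b \<in> I" using ideal_add[OF I] by blast
  ultimately show "x + y \<in> ?I" using ab mult_set_mult[OF W] by (metis localizationI)
next
  let ?L = "localization R W" and ?I = "localization I W"
  fix s x assume "s \<in> ?L" "x \<in> ?I"
  then obtain a w b v where ab: "a \<in> R" "w \<in> W" "s = a / w" "b \<in> I" "v \<in> W" "x = b / v"
    by (metis localizationE)
  have "s * x = (a * b) / (w * v)" unfolding ab(3,6) by simp
  moreover have "a * b \<in> I" using ab ideal_mult[OF I] by blast
  ultimately show "s * x \<in> ?I" using ab mult_set_mult[OF W] by (metis localizationI)
qed

lemma localization_prime_contraction:
  assumes W: "mult_set R W" and p: "prime_ideal_in R p" and "p \<inter> W = {}"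
  shows "localization p W \<inter> R = p"
proof
  have "p \<subseteq> R" using p unfolding prime_ideal_in_def ideal_in_def by blast
  then show "p \<subseteq> localization p W \<inter> R"
    using mult_set_one[OF W] by (auto intro: localizationI[of _ _ 1])
  show "localization p W \<inter> R \<subseteq> p"
  proof
    fix x assume x: "x \<in> localization p W \<inter> R"
    then obtain c w where "c \<in> p" "w \<in> W" "x = c / w" by (blast elim: localizationE)
    then have "x * w \<in> p" using mult_set_nonzero[OF W] by simp
    moreover have "x \<in> R" "w \<in> R" using x \<open>w \<in> W\<close> mult_set_subset[OF W] by auto
    ultimately have "x \<in> p \<or> w \<in> p" using p unfolding prime_ideal_in_def by blast
    then show "x \<in> p" using \<open>w \<in> W\<close> \<open>p \<inter> W = {}\<close> by blast
  qed
qed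

lemma prime_ideal_localization:
  assumes R: "subring R" and W: "mult_set R W" and p: "prime_ideal_in R p" and "p \<inter> W = {}"
  shows "prime_ideal_in (localization R W) (localization p W)"
proof -
  let ?L = "localization R W" and ?p = "localization p W"
  have pi: "ideal_in R p" using p unfolding prime_ideal_in_def by simp
  have pprime: "a \<in> p \<or> b \<in> p" if "a \<in> R" "b \<in> R" "a * b \<in> p" for a b
    using p that unfolding prime_ideal_in_def by blast
  have "1 \<notin> ?p"
  proof
    assume "1 \<in> ?p"
    then obtain a w where "a \<in> p" "w \<in> W" "1 = a / w" by (rule localizationE)
    then have "w \<in> p" using mult_set_nonzero[OF W] by (simp add: field_simps)
    with \<open>w \<in> W\<close> \<open>p \<inter> W = {}\<close> show False by blast
  qed
  moreover have "s \<in> ?p \<or> t \<in> ?p" if st: "s \<in> ?L" "t \<in> ?L" "s * t \<in> ?p" for s t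
  proof -
    obtain a u b v where ab: "a \<in> R" "u \<in> W" "s = a / u" "b \<in> R" "v \<in> W" "t = b / v"
      using st(1,2) by (metis localizationE)
    obtain c w where cw: "c \<in> p" "w \<in> W" "s * t = c / w" using st(3) by (rule localizationE)
    have "(a * b) * w = (u * v) * c"
      using cw(3) ab(3,6) ab(2,5) cw(2) mult_set_nonzero[OF W] by (simp add: field_simps)
    moreover have "u * v \<in> R" using ab mult_set_mult[OF W] mult_set_subset[OF W] by blast
    then have "(u * v) * c \<in> p" using ideal_mult[OF pi] cw(1) by blast
    moreover have "a * b \<in> R" "w \<in> R"
      using ab cw subring_mult[OF R] mult_set_subset[OF W] by auto
    ultimately have "a * b \<in> p \<or> w \<in> p" using pprime by metis
    then have "a \<in> p \<or> b \<in> p" using cw(2) \<open>p \<inter> W = {}\<close> ab(1,4) pprime by blast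
    then show ?thesis using ab by (metis localizationI)
  qed
  ultimately show ?thesis
    using ideal_localization[OF R W pi] unfolding prime_ideal_in_def by blast
qed

lemma ideal_eq_localization_contraction:
  assumes R: "subring R" and W: "mult_set R W" and I: "ideal_in (localization R W) I"
  shows "I = localization (I \<inter> R) W"
proof
  show "I \<subseteq> localization (I \<inter> R) W"
  proof
    fix x assume "x \<in> I"
    then obtain a w where aw: "a \<in> R" "w \<in> W" "x = a / w"
      using ideal_subset[OF I] by (metis subsetD localizationE)
    have "w * x \<in> I"
      using ideal_mult[OF I] \<open>x \<in> I\<close> aw subset_localization[OF W] mult_set_subset[OF W] by blast
    moreover have "w * x = a" using aw mult_set_nonzero[OF W] by simp
    ultimately show "x \<in> localization (I \<inter> R) W" using aw by (auto intro: localizationI)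
  qed
  show "localization (I \<inter> R) W \<subseteq> I"
  proof
    fix x assume "x \<in> localization (I \<inter> R) W"
    then obtain a w where aw: "a \<in> I" "w \<in> W" "x = a / w" by (metis IntE localizationE)
    have "(1 / w) * a \<in> I" using ideal_mult[OF I] aw inverse_in_localization[OF R W] by blast
    then show "x \<in> I" using aw by simp
  qed
qed

subsection \<open>Going-down through a localization\<close>

lemma going_down_localization_down:
  assumes R: "subring R" and W: "mult_set R W" and LS: "localization R W \<subseteq> S"
    and gd: "going_down (localization R W) S"
  shows "going_down R S"
  unfolding going_down_def
proof (intro allI impI, elim conjE)
  let ?L = "localization R W"
  fix p q Q assume p: "prime_ideal_in R p" and "prime_ideal_in R q" and "p \<subset> q"
    and Q: "prime_ideal_in S Q" and Qq: "Q \<inter> R = q"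
  have RL: "R \<subseteq> ?L" using subset_localization[OF W] .
  have Qi: "ideal_in S Q" and "1 \<notin> Q" using Q unfolding prime_ideal_in_def by auto
  have inv: "1 / w \<in> S" if "w \<in> W" for w using inverse_in_localization[OF R W that] LS by blast
  have "Q \<inter> W = {}"
  proof (rule ccontr)
    assume "Q \<inter> W \<noteq> {}"
    then obtain w where "w \<in> Q" "w \<in> W" by auto
    then have "(1 / w) * w \<in> Q" using ideal_mult[OF Qi] inv by blast
    then show False using \<open>w \<in> W\<close> mult_set_nonzero[OF W] \<open>1 \<notin> Q\<close> by simp
  qed
  then have "p \<inter> W = {}" using Qq \<open>p \<subset> q\<close> by blast
  let ?p = "localization p W" and ?q = "Q \<inter> ?L"
  have p': "prime_ideal_in ?L ?p" "?p \<inter> R = p"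
    using prime_ideal_localization[OF R W p] localization_prime_contraction[OF W p]
      \<open>p \<inter> W = {}\<close> by auto
  have q': "prime_ideal_in ?L ?q" using prime_ideal_contraction[OF subring_localization[OF R W] LS Q] .
  have "?p \<subseteq> ?q"
  proof
    fix x assume "x \<in> ?p"
    then obtain c w where "c \<in> p" "w \<in> W" "x = c / w" by (rule localizationE)
    moreover from this have "(1 / w) * c \<in> Q" using ideal_mult[OF Qi] inv \<open>p \<subset> q\<close> Qq by blast
    moreover have "x \<in> ?L" using \<open>x \<in> ?p\<close> p'(1) unfolding prime_ideal_in_def ideal_in_def by blast
    ultimately show "x \<in> ?q" by simp
  qed
  moreover have "?p \<noteq> ?q" using p'(2) Qq RL \<open>p \<subset> q\<close> by blast
  ultimately obtain P where P: "prime_ideal_in S P" "P \<subseteq> Q" "P \<inter> ?L = ?p"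
    using gd p'(1) q' Q unfolding going_down_def by blast
  moreover have "P \<inter> R = p" using P(3) p'(2) RL by blast
  ultimately show "\<exists>P. prime_ideal_in S P \<and> P \<subseteq> Q \<and> P \<inter> R = p" by blast
qed

lemma going_down_localization_up:
  assumes R: "subring R" and W: "mult_set R W" and LS: "localization R W \<subseteq> S"
    and gd: "going_down R S"
  shows "going_down (localization R W) S"
  unfolding going_down_def
proof (intro allI impI, elim conjE)
  let ?L = "localization R W"
  fix p q Q assume p: "prime_ideal_in ?L p" and q: "prime_ideal_in ?L q" and "p \<subset> q"
    and Q: "prime_ideal_in S Q" and Qq: "Q \<inter> ?L = q"
  have RL: "R \<subseteq> ?L" using subset_localization[OF W] .
  have extended: "I = localization (I \<inter> R) W" if "prime_ideal_in ?L I" for I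
    using that ideal_eq_localization_contraction[OF R W] unfolding prime_ideal_in_def by blast
  have "p \<inter> R \<subset> q \<inter> R" using extended[OF p] extended[OF q] \<open>p \<subset> q\<close> by auto
  moreover have "Q \<inter> R = q \<inter> R" using Qq RL by blast
  ultimately obtain P where P: "prime_ideal_in S P" "P \<subseteq> Q" "P \<inter> R = p \<inter> R"
    using gd Q prime_ideal_contraction[OF R RL p] prime_ideal_contraction[OF R RL q]
    unfolding going_down_def by blast
  have "prime_ideal_in ?L (P \<inter> ?L)"
    using prime_ideal_contraction[OF subring_localization[OF R W] LS P(1)] .
  then have "P \<inter> ?L = localization (P \<inter> R) W" using extended RL by (metis Int_assoc inf.absorb_iff2)
  then have "P \<inter> ?L = p" using P(3) extended[OF p] by simp
  with P show "\<exists>P. prime_ideal_in S P \<and> P \<subseteq> Q \<and> P \<inter> ?L = p" by blast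
qed

lemma localization_of_localization:
  assumes R: "subring R" and W: "mult_set R W" and V: "mult_set (localization R W) V"
  obtains V' where "mult_set R V'" "localization (localization R W) V = localization R V'"
proof -
  let ?L = "localization R W"
  let ?S = "localization ?L V"
  let ?V' = "{x \<in> R. x \<noteq> 0 \<and> 1 / x \<in> ?S}"
  have L: "subring ?L" using subring_localization[OF R W] .
  have S: "subring ?S" using subring_localization[OF L V] .
  have RL: "R \<subseteq> ?L" and LS: "?L \<subseteq> ?S" using subset_localization[OF W] subset_localization[OF V] .
  have "x * y \<in> ?V'" if "x \<in> ?V'" "y \<in> ?V'" for x y
  proof -
    have "(1 / x) * (1 / y) \<in> ?S" using that subring_mult[OF S] by blast
    then show ?thesis using that subring_mult[OF R] by auto
  qed
  then have V': "mult_set R ?V'"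
    using subring_one[OF R] subring_one[OF S] unfolding mult_set_def by auto
  have "?S \<subseteq> localization R ?V'"
  proof
    fix s assume "s \<in> ?S"
    then obtain y v where yv: "y \<in> ?L" "v \<in> V" "s = y / v" by (rule localizationE)
    obtain b u where bu: "b \<in> R" "u \<in> W" "y = b / u" using yv(1) by (rule localizationE)
    have "v \<in> ?L" using yv(2) mult_set_subset[OF V] by blast
    then obtain a w where aw: "a \<in> R" "w \<in> W" "v = a / w" by (rule localizationE)
    have nz: "v \<noteq> 0" "u \<noteq> 0" "w \<noteq> 0"
      using yv(2) bu(2) aw(2) mult_set_nonzero[OF V] mult_set_nonzero[OF W] by auto
    then have "a \<noteq> 0" using aw(3) by auto
    have "1 / u \<in> ?S" "1 / v \<in> ?S" "1 / w \<in> ?S"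
      using inverse_in_localization[OF R W] inverse_in_localization[OF L V] bu(2) aw(2) yv(2) LS
      by blast+
    then have "(1 / u) * ((1 / v) * (1 / w)) \<in> ?S" using subring_mult[OF S] by blast
    moreover have "(1 / u) * ((1 / v) * (1 / w)) = 1 / (u * a)"
      unfolding aw(3) using nz \<open>a \<noteq> 0\<close> by (simp add: field_simps)
    moreover have "u * a \<in> R" "b * w \<in> R"
      using bu aw mult_set_subset[OF W] subring_mult[OF R] by blast+
    ultimately have "u * a \<in> ?V'" using nz \<open>a \<noteq> 0\<close> by simp
    moreover have "s = (b * w) / (u * a)"
      unfolding yv(3) bu(3) aw(3) using nz \<open>a \<noteq> 0\<close> by (simp add: field_simps)
    ultimately show "s \<in> localization R ?V'" using \<open>b * w \<in> R\<close> by (metis localizationI)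
  qed
  moreover have "localization R ?V' \<subseteq> ?S"
    using S RL LS by (intro localization_subset_if_inverses) auto
  ultimately show ?thesis using that V' by blast
qed

lemma perinormal_localization:
  assumes R: "subring R" and "perinormal R" and W: "mult_set R W"
  shows "perinormal (localization R W)"
proof -
  let ?L = "localization R W"
  have RL: "R \<subseteq> ?L" using subset_localization[OF W] .
  have "\<exists>V. mult_set ?L V \<and> S = localization ?L V"
    if S: "subring S" "?L \<subseteq> S" "S \<subseteq> frac ?L" "local_ring S" "going_down ?L S" for S
  proof -
    have "going_down R S" using going_down_localization_down[OF R W S(2,5)] .
    moreover have "R \<subseteq> S" "S \<subseteq> frac R" using RL S(2,3) frac_localization_subset[OF R W] by auto
    ultimately obtain V where V: "mult_set R V" "S = localization R V"
      using \<open>perinormal R\<close> S(1,4) unfolding perinormal_def by blast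
    then have "localization ?L V = S" using localization_intermediate[OF R V(1) RL] S(2) by simp
    with V(1) RL show ?thesis using mult_set_mono by blast
  qed
  with subring_localization[OF R W] show ?thesis unfolding perinormal_def by blast
qed

lemma perinormal_if_perinormal_at_maximal_ideals:
  assumes R: "subring R"
    and local_perinormal: "\<And>m. maximal_ideal_in R m \<Longrightarrow> perinormal (localization R (R - m))"
  shows "perinormal R"
proof -
  have "\<exists>V. mult_set R V \<and> S = localization R V"
    if S: "subring S" "R \<subseteq> S" "S \<subseteq> frac R" "local_ring S" "going_down R S" for S
  proof -
    obtain M where M: "maximal_ideal_in S M" using S(4) unfolding local_ring_def by blast
    have "prime_ideal_in R (M \<inter> R)"
      using prime_ideal_contraction[OF R S(2) maximal_imp_prime_ideal[OF S(1) M]] .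
    then obtain m where m: "maximal_ideal_in R m" "M \<inter> R \<subseteq> m"
      using exists_maximal_ideal[OF R] unfolding prime_ideal_in_def by blast
    define W where "W = R - m"
    have W: "mult_set R W"
      unfolding W_def using mult_set_prime_compl[OF R maximal_imp_prime_ideal[OF R m(1)]] .
    let ?L = "localization R W"
    have "1 / w \<in> S" if "w \<in> W" for w
      using that m(2) S(2) local_ring_inverse[OF S(1,4) M] unfolding W_def by blast
    then have LS: "?L \<subseteq> S" using localization_subset_if_inverses[OF S(1,2)] by blast
    have "going_down ?L S" using going_down_localization_up[OF R W LS S(5)] .
    moreover have "S \<subseteq> frac ?L" using S(3) frac_mono[OF subset_localization[OF W]] by blast
    ultimately obtain V where V: "mult_set ?L V" "S = localization ?L V"
      using local_perinormal[OF m(1)] S(1,4) LS unfolding perinormal_def W_def by blast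
    with localization_of_localization[OF R W V(1)] show ?thesis by metis
  qed
  with R show ?thesis unfolding perinormal_def by blast
qed

theorem proposition2p5:
  fixes R :: "'a::field set"
  assumes "subring R"
  shows "(perinormal R \<longrightarrow> (\<forall>W. mult_set R W \<longrightarrow> perinormal (localization R W)))
       \<and> ((\<forall>m. maximal_ideal_in R m \<longrightarrow> perinormal (localization R (R - m)))
            \<longrightarrow> perinormal R)"
  using perinormal_localization[OF assms] perinormal_if_perinormal_at_maximal_ideals[OF assms]
  by blast

end
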